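(* Let $n\ge1$, $\delta\in[0,1]$, $\bm{u}^*\in\mathcal{S}^{n-1}$, let $\mathcal{P}_u'$ be an arbitrary distribution on $\mathcal{S}^{n-1}$, and let $\mathcal{P}_{\bm{a},b}$ be a distribution on $\mathbb{R}^n_+\times\mathbb{R}_+$ such that for some $\underline{a}>0$, $a_i\in[\underline{a},1]$ almost surely for all $i$. For $t=1,\dots,T$, let $(\bm{u}_t,\bm{a}_t,b_t)$ be i.i.d., with $(\bm{a}_t,b_t)\sim\mathcal{P}_{\bm{a},b}$ independent of $\bm{u}_t$, and $\bm{u}_t=\bm{u}^*$ with probability $1-\delta$ and $\bm{u}_t\sim\mathcal{P}_u'$ with probability $\delta$. For $\bm{u}\in\mathbb{R}^n$, $\bm{a}\in\mathbb{R}^n_+$, $b\in\mathbb{R}_+$, let $\mathrm{LP}(\bm{u},\bm{a},b)$ be the linear program $\max_{\bm{x}}\sum_i u_ix_i$ s.t. $\sum_i a_ix_i\le b$, $0\le x_i\le1$, and fix a selection $\bm{x}^{\mathrm{opt}}(\bm{u},\bm{a},b)$ of an optimal solution. Let $\bm{x}^*_t=\bm{x}^{\mathrm{opt}}(\bm{u}_t,\bm{a}_t,b_t)$ and $\bar{\bm{x}}^*_t=\bm{x}^{\mathrm{opt}}(\bm{u}^*,\bm{a}_t,b_t)$, and define $$\mathcal{U}_t=\{\bm{u}\in\mathcal{S}^{n-1}:\bm{x}^*_t\text{ is an optimal solution of }\mathrm{LP}(\bm{u},\bm{a}_t,b_t)\},\qquad \bar{\mathcal{U}}_t=\{\bm{u}\in\mathcal{S}^{n-1}:\bar{\bm{x}}^*_t\text{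 is an optimal solution of }\mathrm{LP}(\bm{u},\bm{a}_t,b_t)\}.$$ Then $$\mathbb{P}\left(\max_{\bm{u}\in\mathcal{S}^{n-1}}\left|\frac1T\sum_{t=1}^TI_{\mathcal{U}_t}(\bm{u})-\frac1T\sum_{t=1}^TI_{\bar{\mathcal{U}}_t}(\bm{u})\right|\le\delta+\frac{\log T}{\sqrt T}\right)\ge1-\frac1T.$$
   Context: $\mathcal{S}^{n-1}$ is the unit sphere in $\mathbb{R}^n$; $I_{\mathcal{E}}(e)=1$ if $e\in\mathcal{E}$ and $0$ otherwise. *)

theory Defs
  imports "HOL-Probability.Probability"
begin

definition lp_feasible :: "real^'n \<Rightarrow> real \<Rightarrow> real^'n \<Rightarrow> bool" where
  "lp_feasible a b x \<longleftrightarrow> (\<forall>i. 0 \<le> x $ i \<and> x $ i \<le> 1) \<and> (\<Sum>i\<in>UNIV. a $ i * x $ i) \<le> b"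

definition lp_optimal :: "real^'n \<Rightarrow> real^'n \<Rightarrow> real \<Rightarrow> real^'n \<Rightarrow> bool" where
  "lp_optimal u a b x \<longleftrightarrow> lp_feasible a b x \<and>
     (\<forall>y. lp_feasible a b y \<longrightarrow> (\<Sum>i\<in>UNIV. u $ i * y $ i) \<le> (\<Sum>i\<in>UNIV. u $ i * x $ i))"

definition opt_dirs :: "real^'n \<Rightarrow> real \<Rightarrow> real^'n \<Rightarrow> (real^'n) set" where
  "opt_dirs a b x = {u \<in> sphere 0 1. lp_optimal u a b x}"

end

theory Submission
  imports Defs
begin

text \<open>
  In a round with \<open>u\<^sub>t = u\<^sup>*\<close> both selected LP solutions are the same vector, so the two
  sets of directions for which they are optimal coincide. Hence, uniformly in the direction,
  the two empirical frequencies differ by at most the fraction of rounds with \<open>u\<^sub>t \<noteq> u\<^sup>*\<close>.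
  These rounds are independent events of probability at most \<open>\<delta>\<close>, and Hoeffding's inequality
  with deviation \<open>ln T / sqrt T\<close> bounds the failure probability by \<open>exp (-2 (ln T)\<^sup>2) \<le> 1/T\<close>.
\<close>

lemma abs_sum_indicator_diff_le_disagreements:
  "\<bar>(\<Sum>t\<in>I. indicator (A t) x) - (\<Sum>t\<in>I. indicator (B t) x)\<bar> \<le> (\<Sum>t\<in>I. of_bool (A t \<noteq> B t) :: real)"
proof -
  have "\<bar>(\<Sum>t\<in>I. indicator (A t) x) - (\<Sum>t\<in>I. indicator (B t) x)\<bar>
        \<le> (\<Sum>t\<in>I. \<bar>indicator (A t) x - indicator (B t) x\<bar> :: real)"
    by (simp flip: sum_subtractf add: sum_abs)
  also have "\<dots> \<le> (\<Sum>t\<in>I. of_bool (A t \<noteq> B t))"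
    by (intro sum_mono) (auto simp: indicator_def)
  finally show ?thesis .
qed

lemma SUP_abs_mean_indicator_diff_le:
  assumes "S \<noteq> {}"
    and "(\<Sum>t\<in>I. of_bool (A t \<noteq> B t)) / real n \<le> c"
  shows "(SUP x\<in>S. \<bar>(1 / real n) * (\<Sum>t\<in>I. indicator (A t) x)
                     - (1 / real n) * (\<Sum>t\<in>I. indicator (B t) x)\<bar>) \<le> c"
proof (rule cSUP_least[OF assms(1)])
  fix x
  have "\<bar>(1 / real n) * (\<Sum>t\<in>I. indicator (A t) x) - (1 / real n) * (\<Sum>t\<in>I. indicator (B t) x)\<bar>
        = \<bar>(\<Sum>t\<in>I. indicator (A t) x) - (\<Sum>t\<in>I. indicator (B t) x)\<bar> / real n"
    by (simp add: abs_divide flip: diff_divide_distrib)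
  also have "\<dots> \<le> (\<Sum>t\<in>I. of_bool (A t \<noteq> B t)) / real n"
    by (intro divide_right_mono abs_sum_indicator_diff_le_disagreements) simp
  finally show "\<bar>(1 / real n) * (\<Sum>t\<in>I. indicator (A t) x) - (1 / real n) * (\<Sum>t\<in>I. indicator (B t) x)\<bar> \<le> c"
    using assms(2) by linarith
qed

text \<open>This fails for real \<open>1 < n < sqrt e\<close>; integrality gives \<open>ln n \<ge> ln 2 > 1/2\<close>.\<close>

lemma exp_neg_two_ln_squared_le:
  assumes "n \<ge> 1"
  shows "exp (-2 * (ln (real n))\<^sup>2) \<le> 1 / real n"
proof -
  have "ln (real n) \<le> 2 * (ln (real n))\<^sup>2"
  proof (cases "n = 1")
    case False
    with assms have "ln 2 \<le> ln (real n)" by simp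
    then have "1/2 \<le> ln (real n)"
      using ln2_ge_two_thirds by linarith
    then show ?thesis by (simp add: power2_eq_square)
  qed simp
  then have "exp (-2 * (ln (real n))\<^sup>2) \<le> exp (- ln (real n))" by simp
  also have "\<dots> = 1 / real n" using assms by (simp add: exp_minus inverse_eq_divide)
  finally show ?thesis .
qed

lemma (in prob_space) Hoeffding_unit_interval_sum_lt:
  fixes X :: "'i \<Rightarrow> 'a \<Rightarrow> real"
  assumes I: "finite I" "I \<noteq> {}"
    and indep: "indep_vars (\<lambda>_. borel) X I"
    and bounded: "\<And>i. i \<in> I \<Longrightarrow> AE x in M. X i x \<in> {0..1}"
    and expectation_le: "\<And>i. i \<in> I \<Longrightarrow> expectation (X i) \<le> p"
    and \<epsilon>: "\<epsilon> \<ge> 0"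
  shows "prob {x \<in> space M. (\<Sum>i\<in>I. X i x) < real (card I) * p + \<epsilon>} \<ge> 1 - exp (-2 * \<epsilon>\<^sup>2 / real (card I))"
proof -
  define \<mu> where "\<mu> = (\<Sum>i\<in>I. expectation (X i))"
  interpret Hoeffding_ineq M I X "\<lambda>_. 0" "\<lambda>_. 1" \<mu>
    by unfold_locales (use I indep bounded in \<open>simp_all add: \<mu>_def\<close>)
  define Dev where "Dev = {x \<in> space M. (\<Sum>i\<in>I. X i x) \<ge> \<mu> + \<epsilon>}"
  have Dev_event: "Dev \<in> events"
    unfolding Dev_def using I by measurable
  have "\<mu> \<le> real (card I) * p"
    using sum_mono[OF expectation_le, of I] by (simp add: \<mu>_def)
  then have "space M - Dev \<subseteq> {x \<in> space M. (\<Sum>i\<in>I. X i x) < real (card I) * p + \<epsilon>}"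
    by (auto simp: Dev_def)
  then have "1 - prob Dev \<le> prob {x \<in> space M. (\<Sum>i\<in>I. X i x) < real (card I) * p + \<epsilon>}"
    unfolding prob_compl[OF Dev_event, symmetric]
    by (intro finite_measure_mono) (use I in measurable)
  moreover have "prob Dev \<le> exp (-2 * \<epsilon>\<^sup>2 / real (card I))"
    using Hoeffding_ineq_ge[OF \<epsilon>] I by (simp add: Dev_def card_gt_0_iff)
  ultimately show ?thesis by linarith
qed

corollary (in prob_space) Hoeffding_unit_interval_mean_lt_ln:
  fixes X :: "'i \<Rightarrow> 'a \<Rightarrow> real"
  assumes I: "finite I" "I \<noteq> {}"
    and indep: "indep_vars (\<lambda>_. borel) X I"
    and bounded: "\<And>i. i \<in> I \<Longrightarrow> AE x in M. X i x \<in> {0..1}"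
    and expectation_le: "\<And>i. i \<in> I \<Longrightarrow> expectation (X i) \<le> p"
  shows "prob {x \<in> space M. (\<Sum>i\<in>I. X i x) / real (card I) < p + ln (card I) / sqrt (card I)}
           \<ge> 1 - 1 / real (card I)"
proof -
  define n where "n = real (card I)"
  have n: "n > 0" "sqrt n ^ 2 = n"
    using I by (simp_all add: n_def card_gt_0_iff)
  have "-2 * (n * (ln n / sqrt n))\<^sup>2 / n = -2 * (ln n)\<^sup>2"
    using n by (simp add: power_mult_distrib power_divide power2_eq_square)
  then have "1 - 1 / n \<le> 1 - exp (-2 * (n * (ln n / sqrt n))\<^sup>2 / n)"
    using exp_neg_two_ln_squared_le[of "card I"] I
    by (simp only:) (simp add: n_def card_gt_0_iff Suc_le_eq)
  also have "\<dots> \<le> prob {x \<in> space M. (\<Sum>i\<in>I. X i x) < n * p + n * (ln n / sqrt n)}"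
    using Hoeffding_unit_interval_sum_lt[OF I indep bounded expectation_le] n
    by (simp add: n_def)
  also have "{x \<in> space M. (\<Sum>i\<in>I. X i x) < n * p + n * (ln n / sqrt n)}
             = {x \<in> space M. (\<Sum>i\<in>I. X i x) / n < p + ln n / sqrt n}"
    using n by (auto simp: field_simps)
  finally show ?thesis by (simp add: n_def)
qed

lemma (in prob_space) indep_vars_indicator_fst:
  assumes "indep_vars (\<lambda>_. borel) Y I" and "A \<in> sets borel"
  shows "indep_vars (\<lambda>_. borel) (\<lambda>i \<omega>. indicator A (fst (Y i \<omega>)) :: real) I"
  by (rule indep_vars_compose2[OF assms(1)])
     (rule measurable_compose[OF borel_measurable_continuous_onI[OF continuous_on_fst[OF continuous_on_id]]],
      use assms(2) in simp)

theorem proposition1: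
  fixes M :: "'w measure"
    and T :: nat and \<delta> :: real and alow :: real
    and ustar :: "real^'n"
    and P' :: "(real^'n) measure"
    and Pab :: "((real^'n) \<times> real) measure"
    and u a :: "nat \<Rightarrow> 'w \<Rightarrow> real^'n"
    and b :: "nat \<Rightarrow> 'w \<Rightarrow> real"
    and xopt :: "real^'n \<Rightarrow> real^'n \<Rightarrow> real \<Rightarrow> real^'n"
  assumes M: "prob_space M"
    and T: "T \<ge> 1"
    and delta: "0 \<le> \<delta>" "\<delta> \<le> 1"
    and ustar: "ustar \<in> sphere 0 1"
    and P'_prob: "prob_space P'" and P'_sets: "sets P' = sets borel"
    and P'_sphere: "AE v in P'. v \<in> sphere 0 1"
    and alow: "alow > 0"
    and Pab_support: "AE (av, bv) in Pab. (\<forall>i. alow \<le> av $ i \<and> av $ i \<le> 1) \<and> 0 \<le> bv"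
    and meas_u: "\<And>t. t \<in> {1..T} \<Longrightarrow> u t \<in> borel_measurable M"
    and meas_a: "\<And>t. t \<in> {1..T} \<Longrightarrow> a t \<in> borel_measurable M"
    and meas_b: "\<And>t. t \<in> {1..T} \<Longrightarrow> b t \<in> borel_measurable M"
    and indep: "prob_space.indep_vars M (\<lambda>_. borel) (\<lambda>t \<omega>. (u t \<omega>, a t \<omega>, b t \<omega>)) {1..T}"
    and indep_uab: "\<And>t. t \<in> {1..T} \<Longrightarrow>
          \<forall>A \<in> sets (borel :: (real^'n) measure). \<forall>B \<in> sets (borel :: ((real^'n) \<times> real) measure).
            measure M {\<omega> \<in> space M. u t \<omega> \<in> A \<and> (a t \<omega>, b t \<omega>) \<in> B}
              = measure M (u t -` A \<inter> space M) * measure M ((\<lambda>\<omega>. (a t \<omega>, b t \<omega>)) -` B \<inter> space M)"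
    and distr_ab: "\<And>t. t \<in> {1..T} \<Longrightarrow> distr M borel (\<lambda>\<omega>. (a t \<omega>, b t \<omega>)) = Pab"
    and distr_u: "\<And>t A. t \<in> {1..T} \<Longrightarrow> A \<in> sets borel \<Longrightarrow>
          measure M (u t -` A \<inter> space M) = (1 - \<delta>) * indicator A ustar + \<delta> * measure P' A"
    and xopt: "\<And>uv av bv. (\<forall>i. 0 \<le> av $ i) \<Longrightarrow> 0 \<le> bv \<Longrightarrow> lp_optimal uv av bv (xopt uv av bv)"
  shows "\<exists>E \<in> sets M. E \<subseteq>
           {\<omega> \<in> space M.
              (SUP v \<in> sphere 0 1.
                 \<bar>(1 / real T) * (\<Sum>t = 1..T. indicator
                      (opt_dirs (a t \<omega>) (b t \<omega>) (xopt (u t \<omega>) (a t \<omega>) (b t \<omega>))) v)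
                  - (1 / real T) * (\<Sum>t = 1..T. indicator
                      (opt_dirs (a t \<omega>) (b t \<omega>) (xopt ustar (a t \<omega>) (b t \<omega>))) v)\<bar>)
              \<le> \<delta> + ln (real T) / sqrt (real T)}
         \<and> measure M E \<ge> 1 - 1 / real T"
proof -
  interpret prob_space M by (rule M)
  define X :: "nat \<Rightarrow> 'w \<Rightarrow> real" where "X t \<omega> = indicator (- {ustar}) (u t \<omega>)" for t \<omega>
  define E where "E = {\<omega> \<in> space M. (\<Sum>t\<in>{1..T}. X t \<omega>) / real T < \<delta> + ln (real T) / sqrt (real T)}"
  have indep_X: "indep_vars (\<lambda>_. borel) X {1..T}"
    using indep_vars_indicator_fst[OF indep, of "- {ustar}"] by (simp add: X_def[abs_def])
  have expectation_X: "expectation (X t) \<le> \<delta>" if t: "t \<in> {1..T}" for t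
  proof -
    have "expectation (X t) = \<delta> * measure P' (- {ustar})"
      using distr_u[OF t, of "- {ustar}"] by (simp add: X_def[abs_def] flip: indicator_vimage)
    also have "\<dots> \<le> \<delta>"
      using delta prob_space.prob_le_1[OF P'_prob] by (simp add: mult_left_le)
    finally show ?thesis .
  qed
  have prob_E: "prob E \<ge> 1 - 1 / real T"
    using Hoeffding_unit_interval_mean_lt_ln[OF _ _ indep_X _ expectation_X] T
    by (simp add: E_def X_def)
  have E_event: "E \<in> events"
    unfolding E_def X_def using meas_u by measurable
  show ?thesis
  proof (intro bexI[OF _ E_event] conjI prob_E subsetI CollectI SUP_abs_mean_indicator_diff_le, goal_cases)
    case (1 \<omega>)
    then show ?case by (simp add: E_def)
  next
    case 2
    then show ?case by simp
  next
    case (3 \<omega>)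
    then have "(\<Sum>t\<in>{1..T}. X t \<omega>) / real T \<le> \<delta> + ln (real T) / sqrt (real T)"
      by (simp add: E_def)
    then show ?case
      by (elim order.trans[rotated], intro divide_right_mono sum_mono)
         (auto simp: X_def indicator_def)
  qed
qed

end
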